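(* In the setting of the augmented matrices $\widehat{\mathbf A}^k=\mathbf S^k\mathbf C^k$ (column-stochastic, with all entries of the rows indexed by $\mathcal V$ of $\widehat{\mathbf A}^{k+K_1-1:k}$ bounded below by $\eta=\bar m^{K_1}$), there exists a sequence of stochastic vectors $\{\boldsymbol\xi^k\}_{k\in\mathbb N_0}\subset\mathbb R^S$ such that for all $k\ge t\ge0$ and all $i,j\in\{1,\dots,S\}$, $$|\widehat A^{k:t}_{ij}-\xi_i^k|\le C\rho^{k-t},\qquad C=2\frac{1+\bar m^{-K_1}}{1-\bar m^{K_1}},\quad\rho=(1-\bar m^{K_1})^{1/K_1}\in(0,1).$$ Furthermore $\xi_i^k\ge\eta$ for all $i\in\mathcal V$ and $k\in\mathbb N_0$.
   Context: $\mathcal G=(\mathcal V,\mathcal E)$, $\mathcal V=\{1,\dots,I\}$, strongly connected digraph without self-loops; $\mathcal N_i^{\rm in}=\{j:(j,i)\in\mathcal E\}$, $\mathcal N_i^{\rm out}=\{j:(i,j)\in\mathcal E\}$. $A=(a_{ij})$ column-stochastic with $a_{ii}\ge\bar m$, $a_{ij}\ge\bar m$ for $(j,i)\in\mathcal E$, $a_{ij}=0$ otherwise, $\bar m\in(0,1)$. Asynchrony model: $(i^k,\mathbf d^k)$, $i^k\in\mathcal V$, $\mathbf d^k=(d_j^k)_{j\in\mathcal N^{\rm in}_{i^k}}$, every agent appears among $i^k,\dots,i^{k+T-1}$ for all $k$, $0\le d_j^k\le D$; $K_1=(2I-1)T+ID$. Counters: $\tau_{ij}^{-1}=-D$; $\tau_{i^kj}^k=\max(\tau_{i^kj}^{k-1},k-d_j^k)$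 for $j\in\mathcal N^{\rm in}_{i^k}$, unchanged otherwise. $\widehat{\mathcal V}=\mathcal V\cup\{(j,i)^d:(j,i)\in\mathcal E,\ 0\le d\le D\}$, $S=|\widehat{\mathcal V}|$. $R^k=\{(j,i^k)^d:j\in\mathcal N^{\rm in}_{i^k},\ k-\tau^k_{i^kj}\le d\le D\}$. $\mathbf C^k$: $C^k_{i^k m}=1$ for $m\in R^k$, $C^k_{mm}=1$ for $m\notin R^k$, else $0$. $\mathbf S^k$: $S^k_{(i^k,j)^0,i^k}=a_{ji^k}$ ($j\in\mathcal N^{\rm out}_{i^k}$), $S^k_{i^ki^k}=a_{i^ki^k}$, $S^k_{hh}=1$ for $h\in\mathcal V\setminus\{i^k\}$, $S^k_{(i,j)^{d+1},(i,j)^d}=1$ ($0\le d\le D-1$), $S^k_{(i,j)^D,(i,j)^D}=1$, else $0$. $\widehat{\mathbf A}^{k:t}=\widehat{\mathbf A}^k\cdots\widehat{\mathbf A}^t$. *)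

theory Defs
  imports Main "HOL-Analysis.Analysis"
begin

text \<open>Agents are the naturals 1..I. Nodes of the augmented graph: an agent, or a
  buffer node Bf j i d standing for (j,i)^d with (j,i) an edge and 0 <= d <= D.\<close>

datatype node = Ag nat | Bf nat nat nat

definition Nin :: "(nat \<times> nat) set \<Rightarrow> nat \<Rightarrow> nat set" where
  "Nin E i = {j. (j, i) \<in> E}"

definition Nout :: "(nat \<times> nat) set \<Rightarrow> nat \<Rightarrow> nat set" where
  "Nout E i = {j. (i, j) \<in> E}"

definition Vhat :: "nat \<Rightarrow> (nat \<times> nat) set \<Rightarrow> nat \<Rightarrow> node set" where
  "Vhat I E D = Ag ` {1..I} \<union> {Bf j i d | j i d. (j, i) \<in> E \<and> d \<le> D}"

text \<open>tauPre (Suc k) is the counter tau^k; tauPre 0 is tau^{-1} = -D.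
  ik k is the agent i^k, dl k j is the delay d_j^k.\<close>
primrec tauPre :: "(nat \<times> nat) set \<Rightarrow> (nat \<Rightarrow> nat) \<Rightarrow> (nat \<Rightarrow> nat \<Rightarrow> nat) \<Rightarrow> nat
    \<Rightarrow> nat \<Rightarrow> nat \<Rightarrow> nat \<Rightarrow> int" where
  "tauPre E ik dl D 0 i j = - int D"
| "tauPre E ik dl D (Suc k) i j =
     (if i = ik k \<and> j \<in> Nin E i
      then max (tauPre E ik dl D k i j) (int k - int (dl k j))
      else tauPre E ik dl D k i j)"

definition tau :: "(nat \<times> nat) set \<Rightarrow> (nat \<Rightarrow> nat) \<Rightarrow> (nat \<Rightarrow> nat \<Rightarrow> nat) \<Rightarrow> nat
    \<Rightarrow> nat \<Rightarrow> nat \<Rightarrow> nat \<Rightarrow> int" where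
  "tau E ik dl D k i j = tauPre E ik dl D (Suc k) i j"

definition Rset :: "(nat \<times> nat) set \<Rightarrow> (nat \<Rightarrow> nat) \<Rightarrow> (nat \<Rightarrow> nat \<Rightarrow> nat) \<Rightarrow> nat
    \<Rightarrow> nat \<Rightarrow> node set" where
  "Rset E ik dl D k = {Bf j (ik k) d | j d. j \<in> Nin E (ik k)
      \<and> int k - tau E ik dl D k (ik k) j \<le> int d \<and> d \<le> D}"

definition Cmat :: "(nat \<times> nat) set \<Rightarrow> (nat \<Rightarrow> nat) \<Rightarrow> (nat \<Rightarrow> nat \<Rightarrow> nat) \<Rightarrow> nat
    \<Rightarrow> nat \<Rightarrow> node \<Rightarrow> node \<Rightarrow> real" where
  "Cmat E ik dl D k r m =
     (if m \<in> Rset E ik dl D k then (if r = Ag (ik k) then 1 else 0)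
      else (if r = m then 1 else 0))"

definition Smat :: "(nat \<Rightarrow> nat \<Rightarrow> real) \<Rightarrow> (nat \<times> nat) set \<Rightarrow> (nat \<Rightarrow> nat) \<Rightarrow> nat
    \<Rightarrow> nat \<Rightarrow> node \<Rightarrow> node \<Rightarrow> real" where
  "Smat a E ik D k r c =
     (case c of
        Ag h \<Rightarrow>
          (if h = ik k then
             (case r of
                Ag h' \<Rightarrow> (if h' = ik k then a (ik k) (ik k) else 0)
              | Bf i j d \<Rightarrow> (if i = ik k \<and> j \<in> Nout E (ik k) \<and> d = 0 then a j (ik k) else 0))
           else (if r = c then 1 else 0))
      | Bf i j d \<Rightarrow>
          (if d < D then (if r = Bf i j (Suc d) then 1 else 0)
           else (if r = c then 1 else 0)))"

definition mmult :: "node set \<Rightarrow> (node \<Rightarrow> node \<Rightarrow> real) \<Rightarrow> (node \<Rightarrow> node \<Rightarrow> real)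
    \<Rightarrow> node \<Rightarrow> node \<Rightarrow> real" where
  "mmult V M N r c = (\<Sum>l\<in>V. M r l * N l c)"

definition Ahat :: "nat \<Rightarrow> (nat \<times> nat) set \<Rightarrow> (nat \<Rightarrow> nat \<Rightarrow> real) \<Rightarrow> (nat \<Rightarrow> nat)
    \<Rightarrow> (nat \<Rightarrow> nat \<Rightarrow> nat) \<Rightarrow> nat \<Rightarrow> nat \<Rightarrow> node \<Rightarrow> node \<Rightarrow> real" where
  "Ahat I E a ik dl D k = mmult (Vhat I E D) (Smat a E ik D k) (Cmat E ik dl D k)"

text \<open>Aprod ... t n is the product hat A^{t+n:t} = hat A^{t+n} ... hat A^t.\<close>
primrec Aprod :: "nat \<Rightarrow> (nat \<times> nat) set \<Rightarrow> (nat \<Rightarrow> nat \<Rightarrow> real) \<Rightarrow> (nat \<Rightarrow> nat)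
    \<Rightarrow> (nat \<Rightarrow> nat \<Rightarrow> nat) \<Rightarrow> nat \<Rightarrow> nat \<Rightarrow> nat \<Rightarrow> node \<Rightarrow> node \<Rightarrow> real" where
  "Aprod I E a ik dl D t 0 = Ahat I E a ik dl D t"
| "Aprod I E a ik dl D t (Suc n) =
     mmult (Vhat I E D) (Ahat I E a ik dl D (t + Suc n)) (Aprod I E a ik dl D t n)"

definition stochastic_vec :: "node set \<Rightarrow> (node \<Rightarrow> real) \<Rightarrow> bool" where
  "stochastic_vec V x \<longleftrightarrow> (\<forall>v\<in>V. 0 \<le> x v) \<and> (\<Sum>v\<in>V. x v) = 1"

end

theory Submission
  imports Defs
begin

text \<open>Each factor \<open>A k\<close> moves at least the fraction \<open>mbar\<close> of the mass at any node along a
  live arc: agents keep their own mass, the active agent sends into fresh buffers, and a buffer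
  ages by one per step until its receiver reads it, at the latest once it is \<open>D\<close> old and the
  receiver is active. Following such arcs, mass starting at any node reaches every agent within
  \<open>K1 = (T + D) + (I - 1) (2 T + D)\<close> steps, so in every product of \<open>K1\<close> consecutive factors
  the agent rows are bounded below by \<open>\<eta> = mbar ^ K1\<close>. A column-stochastic matrix with a row
  bounded below by \<open>\<eta>\<close> contracts the \<open>\<ell>\<^sub>1\<close>-norm of zero-sum vectors by the factor \<open>1 - \<eta>\<close>;
  hence the columns of the products merge geometrically, and a column of the product from
  time \<open>0\<close> serves as \<open>\<xi> k\<close>.\<close>

lemma column_stochastic_contraction:
  fixes V :: "'a set" and P :: "'a \<Rightarrow> 'a \<Rightarrow> real" and x :: "'a \<Rightarrow> real"
  assumes "finite V"
    and colsum: "\<And>j. j \<in> V \<Longrightarrow> (\<Sum>i\<in>V. P i j) = 1"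
    and nonneg: "\<And>i j. i \<in> V \<Longrightarrow> j \<in> V \<Longrightarrow> 0 \<le> P i j"
    and "r \<in> V" and row: "\<And>j. j \<in> V \<Longrightarrow> \<eta> \<le> P r j"
    and sum0: "(\<Sum>j\<in>V. x j) = 0"
  shows "(\<Sum>i\<in>V. \<bar>\<Sum>j\<in>V. P i j * x j\<bar>) \<le> (1 - \<eta>) * (\<Sum>j\<in>V. \<bar>x j\<bar>)"
proof -
  \<comment> \<open>Subtracting \<open>\<eta>\<close> from row \<open>r\<close> does not change \<open>P x\<close> in that row, since \<open>x\<close> sums to zero.\<close>
  have "(\<Sum>j\<in>V. P r j * x j) = (\<Sum>j\<in>V. (P r j - \<eta>) * x j)"
    using sum0 by (simp add: left_diff_distrib sum_subtractf sum_distrib_left[symmetric])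
  then have row_r: "\<bar>\<Sum>j\<in>V. P r j * x j\<bar> \<le> (\<Sum>j\<in>V. (P r j - \<eta>) * \<bar>x j\<bar>)"
    using sum_abs[of "\<lambda>j. (P r j - \<eta>) * x j" V] row by (simp add: abs_mult)
  have other_rows: "\<bar>\<Sum>j\<in>V. P i j * x j\<bar> \<le> (\<Sum>j\<in>V. P i j * \<bar>x j\<bar>)" if "i \<in> V" for i
    using sum_abs[of "\<lambda>j. P i j * x j" V] nonneg that by (simp add: abs_mult)
  have rest: "(\<Sum>i\<in>V - {r}. P i j) = 1 - P r j" if "j \<in> V" for j
    using sum.remove[OF \<open>finite V\<close> \<open>r \<in> V\<close>, of "\<lambda>i. P i j"] colsum that by simp
  have "(\<Sum>i\<in>V. \<bar>\<Sum>j\<in>V. P i j * x j\<bar>)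
      = \<bar>\<Sum>j\<in>V. P r j * x j\<bar> + (\<Sum>i\<in>V - {r}. \<bar>\<Sum>j\<in>V. P i j * x j\<bar>)"
    using \<open>finite V\<close> \<open>r \<in> V\<close> by (rule sum.remove)
  also have "\<dots> \<le> (\<Sum>j\<in>V. (P r j - \<eta>) * \<bar>x j\<bar>) + (\<Sum>i\<in>V - {r}. \<Sum>j\<in>V. P i j * \<bar>x j\<bar>)"
    by (intro add_mono row_r sum_mono other_rows) auto
  also have "(\<Sum>i\<in>V - {r}. \<Sum>j\<in>V. P i j * \<bar>x j\<bar>) = (\<Sum>j\<in>V. (1 - P r j) * \<bar>x j\<bar>)"
    by (subst sum.swap) (simp add: sum_distrib_right[symmetric] rest)
  also have "(\<Sum>j\<in>V. (P r j - \<eta>) * \<bar>x j\<bar>) + \<dots> = (1 - \<eta>) * (\<Sum>j\<in>V. \<bar>x j\<bar>)"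
    by (simp add: sum.distrib[symmetric] sum_distrib_left algebra_simps)
  finally show ?thesis .
qed

lemma power_window_le_root_power:
  fixes b :: real
  assumes "0 < b" "b < 1" "0 < K"
  shows "b ^ (Suc n div K) \<le> (b powr (1 / real K)) ^ n / b"
proof -
  define q where "q = Suc n div K"
  have "Suc n = q * K + Suc n mod K"
    unfolding q_def by simp
  moreover have "Suc n mod K < K"
    using \<open>0 < K\<close> by simp
  ultimately have "Suc n < (q + 1) * K"
    by (simp add: algebra_simps)
  then have "real n / real K - 1 \<le> real q"
    using \<open>0 < K\<close> by (simp add: field_simps flip: of_nat_mult of_nat_add)
  then have "b ^ q \<le> b powr (real n / real K - 1)"
    using assms by (simp add: powr_mono' flip: powr_realpow)
  also have "\<dots> = (b powr (1 / real K)) ^ n / b"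
    using assms by (simp add: powr_diff powr_powr flip: powr_realpow)
  finally show ?thesis unfolding q_def .
qed

lemma root_powr_bounds:
  fixes b :: real
  assumes "0 < b" "b < 1" "0 < K"
  shows "0 < b powr (1 / real K)" "b powr (1 / real K) < 1"
  using assms powr_less_mono2[of "1 / real K" b 1] by auto

locale column_stochastic_seq =
  fixes V :: "node set" and M :: "nat \<Rightarrow> node \<Rightarrow> node \<Rightarrow> real"
  assumes finite_V: "finite V"
    and M_nonneg: "0 \<le> M k r c"
    and M_colsum: "c \<in> V \<Longrightarrow> (\<Sum>r\<in>V. M k r c) = 1"
begin

fun Mprod :: "nat \<Rightarrow> nat \<Rightarrow> node \<Rightarrow> node \<Rightarrow> real" where
  "Mprod s 0 = (\<lambda>r c. if r = c then 1 else 0)"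
| "Mprod s (Suc n) = mmult V (M (s + n)) (Mprod s n)"

lemma Mprod_nonneg: "0 \<le> Mprod s n r c"
  by (induction n arbitrary: r c) (auto simp: mmult_def intro!: sum_nonneg mult_nonneg_nonneg M_nonneg)

lemma Mprod_colsum: "c \<in> V \<Longrightarrow> (\<Sum>r\<in>V. Mprod s n r c) = 1"
proof (induction n)
  case 0
  then show ?case using finite_V by simp
next
  case (Suc n)
  have "(\<Sum>r\<in>V. Mprod s (Suc n) r c) = (\<Sum>l\<in>V. (\<Sum>r\<in>V. M (s + n) r l) * Mprod s n l c)"
    unfolding Mprod.simps mmult_def sum_distrib_right by (rule sum.swap)
  also have "\<dots> = (\<Sum>l\<in>V. Mprod s n l c)"
    by (simp add: M_colsum)
  finally show ?case using Suc by simp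
qed

lemma Mprod_le_1: "r \<in> V \<Longrightarrow> c \<in> V \<Longrightarrow> Mprod s n r c \<le> 1"
  using member_le_sum[of r V "\<lambda>r. Mprod s n r c"] finite_V Mprod_nonneg Mprod_colsum by simp

lemma Mprod_add:
  assumes "r \<in> V" "c \<in> V"
  shows "Mprod s (n + m) r c = (\<Sum>l\<in>V. Mprod (s + n) m r l * Mprod s n l c)"
  using assms(1)
proof (induction m arbitrary: r)
  case 0
  have "(\<Sum>l\<in>V. Mprod (s + n) 0 r l * Mprod s n l c) = (\<Sum>l\<in>V. if l = r then Mprod s n r c else 0)"
    by (intro sum.cong) auto
  then show ?case using 0 finite_V by simp
next
  case (Suc m)
  have "Mprod s (n + Suc m) r c
      = (\<Sum>l\<in>V. M (s + n + m) r l * (\<Sum>p\<in>V. Mprod (s + n) m l p * Mprod s n p c))"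
    by (simp add: mmult_def Suc.IH add.assoc)
  also have "\<dots> = (\<Sum>l\<in>V. \<Sum>p\<in>V. M (s + n + m) r l * Mprod (s + n) m l p * Mprod s n p c)"
    by (simp add: sum_distrib_left mult.assoc)
  also have "\<dots> = (\<Sum>p\<in>V. \<Sum>l\<in>V. M (s + n + m) r l * Mprod (s + n) m l p * Mprod s n p c)"
    by (rule sum.swap)
  finally show ?case by (simp add: mmult_def sum_distrib_right)
qed

lemma Mprod_Suc_lower:
  assumes "\<beta> ^ n \<le> Mprod s n r c" "0 \<le> \<beta>" "\<beta> \<le> M (s + n) r' r" "r \<in> V"
  shows "\<beta> ^ Suc n \<le> Mprod s (Suc n) r' c"
proof -
  have "\<beta> * \<beta> ^ n \<le> M (s + n) r' r * Mprod s n r c"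
    using assms by (intro mult_mono) auto
  also have "\<dots> \<le> (\<Sum>l\<in>V. M (s + n) r' l * Mprod s n l c)"
    using assms(4) finite_V
    by (intro member_le_sum) (auto intro: mult_nonneg_nonneg M_nonneg Mprod_nonneg)
  finally show ?thesis by (simp add: mmult_def)
qed

definition column_dist :: "nat \<Rightarrow> nat \<Rightarrow> node \<Rightarrow> node \<Rightarrow> real" where
  "column_dist s n j l = (\<Sum>i\<in>V. \<bar>Mprod s n i j - Mprod s n i l\<bar>)"

lemma column_dist_le_2:
  assumes "j \<in> V" "l \<in> V"
  shows "column_dist s n j l \<le> 2"
proof -
  have "column_dist s n j l \<le> (\<Sum>i\<in>V. Mprod s n i j + Mprod s n i l)"
    unfolding column_dist_def by (intro sum_mono) (simp add: Mprod_nonneg abs_le_iff)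
  also have "\<dots> = 2"
    using assms by (simp add: sum.distrib Mprod_colsum)
  finally show ?thesis .
qed

lemma column_dist_contract:
  assumes "j \<in> V" "l \<in> V" "r \<in> V" "\<And>p. p \<in> V \<Longrightarrow> \<eta> \<le> Mprod (s + n) m r p"
  shows "column_dist s (n + m) j l \<le> (1 - \<eta>) * column_dist s n j l"
proof -
  define x where "x p = Mprod s n p j - Mprod s n p l" for p
  have "Mprod s (n + m) i j - Mprod s (n + m) i l = (\<Sum>p\<in>V. Mprod (s + n) m i p * x p)"
    if "i \<in> V" for i
    using Mprod_add[OF that assms(1)] Mprod_add[OF that assms(2)]
    by (simp add: x_def right_diff_distrib sum_subtractf)
  then have "column_dist s (n + m) j l = (\<Sum>i\<in>V. \<bar>\<Sum>p\<in>V. Mprod (s + n) m i p * x p\<bar>)"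
    unfolding column_dist_def by (intro sum.cong) simp_all
  also have "\<dots> \<le> (1 - \<eta>) * (\<Sum>p\<in>V. \<bar>x p\<bar>)"
    using assms
    by (intro column_stochastic_contraction[OF finite_V _ _ assms(3)])
      (simp_all add: Mprod_colsum Mprod_nonneg x_def sum_subtractf)
  finally show ?thesis by (simp add: column_dist_def x_def)
qed

end

locale ergodic_seq = column_stochastic_seq +
  fixes K :: nat and \<eta> :: real and G :: "node set"
  assumes K_pos: "0 < K" and eta_pos: "0 < \<eta>" and eta_less_1: "\<eta> < 1"
    and G_subset: "G \<subseteq> V" and G_nonempty: "G \<noteq> {}"
    and window_lower: "g \<in> G \<Longrightarrow> c \<in> V \<Longrightarrow> \<eta> \<le> Mprod s K g c"
begin

lemma column_dist_decay:
  assumes "j \<in> V" "l \<in> V"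
  shows "column_dist s n j l \<le> 2 * (1 - \<eta>) ^ (n div K)"
proof -
  obtain g where g: "g \<in> G" "g \<in> V" using G_nonempty G_subset by blast
  have "column_dist s (q * K + n mod K) j l \<le> 2 * (1 - \<eta>) ^ q" for q
  proof (induction q)
    case 0
    show ?case using column_dist_le_2[OF assms] by simp
  next
    case (Suc q)
    have "column_dist s ((q * K + n mod K) + K) j l \<le> (1 - \<eta>) * column_dist s (q * K + n mod K) j l"
      using g by (intro column_dist_contract[OF assms g(2)] window_lower)
    also have "\<dots> \<le> (1 - \<eta>) * (2 * (1 - \<eta>) ^ q)"
      using Suc.IH eta_less_1 by (intro mult_left_mono) auto
    finally show ?case by (simp add: algebra_simps)
  qed
  from this[of "n div K"] show ?thesis by simp
qed

lemma Mprod_column_approx: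
  assumes "r \<in> V" "j \<in> V" "\<And>l. l \<in> V \<Longrightarrow> 0 \<le> w l" "(\<Sum>l\<in>V. w l) = 1"
  shows "\<bar>Mprod t n r j - (\<Sum>l\<in>V. Mprod t n r l * w l)\<bar> \<le> 2 * (1 - \<eta>) ^ (n div K)"
proof -
  have "Mprod t n r j - (\<Sum>l\<in>V. Mprod t n r l * w l) = (\<Sum>l\<in>V. (Mprod t n r j - Mprod t n r l) * w l)"
    using assms(4) by (simp add: left_diff_distrib sum_subtractf sum_distrib_left[symmetric])
  also have "\<bar>\<dots>\<bar> \<le> (\<Sum>l\<in>V. column_dist t n j l * w l)"
  proof (rule order_trans[OF sum_abs sum_mono])
    fix l assume l: "l \<in> V"
    have "\<bar>Mprod t n r j - Mprod t n r l\<bar> \<le> column_dist t n j l"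
      unfolding column_dist_def using assms(1) finite_V by (intro member_le_sum) auto
    then show "\<bar>(Mprod t n r j - Mprod t n r l) * w l\<bar> \<le> column_dist t n j l * w l"
      using assms(3)[OF l] by (simp add: abs_mult mult_right_mono)
  qed
  also have "\<dots> \<le> (\<Sum>l\<in>V. 2 * (1 - \<eta>) ^ (n div K) * w l)"
    using assms by (intro sum_mono mult_right_mono column_dist_decay) auto
  also have "\<dots> = 2 * (1 - \<eta>) ^ (n div K)"
    using assms(4) by (simp add: sum_distrib_left[symmetric])
  finally show ?thesis .
qed

text \<open>Padding to a full window keeps the rows in \<open>G\<close> bounded below also when \<open>k + 1 < K\<close>.\<close>

definition limit_vec :: "node \<Rightarrow> nat \<Rightarrow> node \<Rightarrow> real" where
  "limit_vec c k r = Mprod 0 (max (Suc k) K) r c"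

lemma limit_vec_stochastic: "c \<in> V \<Longrightarrow> stochastic_vec V (limit_vec c k)"
  by (simp add: stochastic_vec_def limit_vec_def Mprod_nonneg Mprod_colsum)

lemma limit_vec_lower:
  assumes "c \<in> V" "g \<in> G"
  shows "\<eta> \<le> limit_vec c k g"
proof -
  define s where "s = max (Suc k) K - K"
  have "limit_vec c k g = (\<Sum>l\<in>V. Mprod s K g l * Mprod 0 s l c)"
    using Mprod_add[of g c 0 s K] assms G_subset by (auto simp: limit_vec_def s_def)
  also have "\<dots> \<ge> (\<Sum>l\<in>V. \<eta> * Mprod 0 s l c)"
    using assms by (intro sum_mono mult_right_mono window_lower Mprod_nonneg)
  also have "(\<Sum>l\<in>V. \<eta> * Mprod 0 s l c) = \<eta>"
    using assms by (simp add: sum_distrib_left[symmetric] Mprod_colsum)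
  finally show ?thesis .
qed

lemma limit_vec_approx:
  assumes "c \<in> V" "t \<le> k" "i \<in> V" "j \<in> V"
  shows "\<bar>Mprod t (Suc (k - t)) i j - limit_vec c k i\<bar> \<le> 2 * (1 - \<eta>) ^ (Suc (k - t) div K)"
proof (cases "K \<le> Suc k")
  case True
  have "limit_vec c k i = (\<Sum>l\<in>V. Mprod t (Suc (k - t)) i l * Mprod 0 t l c)"
    using Mprod_add[of i c 0 t "Suc (k - t)"] assms True by (simp add: limit_vec_def)
  moreover have "\<bar>Mprod t (Suc (k - t)) i j - (\<Sum>l\<in>V. Mprod t (Suc (k - t)) i l * Mprod 0 t l c)\<bar>
      \<le> 2 * (1 - \<eta>) ^ (Suc (k - t) div K)"
    using assms by (intro Mprod_column_approx) (simp_all add: Mprod_nonneg Mprod_colsum)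
  ultimately show ?thesis by simp
next
  case False
  \<comment> \<open>Both entries lie in \<open>[0, 1]\<close>, and the exponent on the right is \<open>0\<close>.\<close>
  then have "Suc (k - t) div K = 0" by simp
  moreover have "0 \<le> limit_vec c k i" "limit_vec c k i \<le> 1"
    using assms by (simp_all add: limit_vec_def Mprod_nonneg Mprod_le_1)
  ultimately show ?thesis
    using Mprod_nonneg[of t "Suc (k - t)" i j] Mprod_le_1[OF assms(3,4), of t "Suc (k - t)"]
    by (simp add: abs_le_iff del: Mprod.simps)
qed

theorem weak_ergodicity:
  obtains \<xi> :: "nat \<Rightarrow> node \<Rightarrow> real"
  where "\<And>k. stochastic_vec V (\<xi> k)"
    and "\<And>k t i j. t \<le> k \<Longrightarrow> i \<in> V \<Longrightarrow> j \<in> V \<Longrightarrow>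
      \<bar>Mprod t (Suc (k - t)) i j - \<xi> k i\<bar>
        \<le> 2 * (1 + 1 / \<eta>) / (1 - \<eta>) * ((1 - \<eta>) powr (1 / real K)) ^ (k - t)"
    and "\<And>k g. g \<in> G \<Longrightarrow> \<eta> \<le> \<xi> k g"
proof -
  obtain c where c: "c \<in> V" using G_nonempty G_subset by blast
  let ?\<rho> = "(1 - \<eta>) powr (1 / real K)"
  have decay: "2 * (1 - \<eta>) ^ (Suc n div K) \<le> 2 * (1 + 1 / \<eta>) / (1 - \<eta>) * ?\<rho> ^ n" for n
  proof -
    have "(1 - \<eta>) ^ (Suc n div K) \<le> ?\<rho> ^ n / (1 - \<eta>)"
      using eta_pos eta_less_1 K_pos by (intro power_window_le_root_power) auto
    also have "\<dots> \<le> (1 + 1 / \<eta>) * (?\<rho> ^ n / (1 - \<eta>))"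
      using mult_right_mono[of 1 "1 + 1 / \<eta>" "?\<rho> ^ n / (1 - \<eta>)"] eta_pos eta_less_1 by simp
    finally show ?thesis
      using eta_pos eta_less_1 by (simp add: field_simps)
  qed
  show ?thesis
  proof (rule that[of "limit_vec c"])
    show "\<bar>Mprod t (Suc (k - t)) i j - limit_vec c k i\<bar>
        \<le> 2 * (1 + 1 / \<eta>) / (1 - \<eta>) * ?\<rho> ^ (k - t)"
      if "t \<le> k" "i \<in> V" "j \<in> V" for k t i j
      using limit_vec_approx[OF c that] decay order_trans by blast
  qed (use c limit_vec_stochastic limit_vec_lower in auto)
qed

end

lemma rtrancl_imp_relpow_less_card:
  assumes "finite A" "E \<subseteq> A \<times> A" "h \<in> A" "(h, g) \<in> E\<^sup>*"
  shows "\<exists>p < card A. (h, g) \<in> E ^^ p"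
proof -
  define p where "p = (LEAST p. (h, g) \<in> E ^^ p)"
  have path: "(h, g) \<in> E ^^ p"
    unfolding p_def using rtrancl_imp_relpow[OF assms(4)] by (rule LeastI_ex)
  have "p < card A"
  proof (rule ccontr)
    assume "\<not> p < card A"
    from path obtain f where f: "f 0 = h" "f p = g" "\<forall>i<p. (f i, f (Suc i)) \<in> E"
      by (auto simp: relpow_fun_conv)
    have "f i \<in> A" if "i \<le> p" for i
    proof (cases i)
      case (Suc i')
      then have "(f i', f i) \<in> E" using f(3) that by simp
      then show ?thesis using assms(2) by auto
    qed (use f(1) assms(3) in simp)
    then have "f ` {0..p} \<subseteq> A" by auto
    have "\<not> inj_on f {0..p}"
    proof
      assume "inj_on f {0..p}"
      then have "Suc p = card (f ` {0..p})" by (simp add: card_image)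
      also have "\<dots> \<le> card A" using card_mono[OF assms(1)] \<open>f ` {0..p} \<subseteq> A\<close> .
      finally show False using \<open>\<not> p < card A\<close> by simp
    qed
    \<comment> \<open>A repeated vertex \<open>f x = f y\<close> lets us cut out the cycle and get a shorter path.\<close>
    then obtain x y where xy: "x < y" "y \<le> p" "f x = f y"
      unfolding inj_on_def by (metis atLeastAtMost_iff linorder_neqE_nat zero_le)
    have "(h, f x) \<in> E ^^ x"
      unfolding relpow_fun_conv using f xy by (intro exI[of _ f]) auto
    moreover have "(f y, g) \<in> E ^^ (p - y)"
      unfolding relpow_fun_conv using f xy by (intro exI[of _ "\<lambda>i. f (y + i)"]) auto
    ultimately have "(h, g) \<in> E ^^ (x + (p - y))"
      using xy(3) by (auto simp: relpow_add)
    moreover have "x + (p - y) < p" using xy by simp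
    ultimately show False
      unfolding p_def using not_less_Least by blast
  qed
  with path show ?thesis by blast
qed

locale augmented_network =
  fixes I T D :: nat and E :: "(nat \<times> nat) set" and a :: "nat \<Rightarrow> nat \<Rightarrow> real"
    and mbar :: real and ik :: "nat \<Rightarrow> nat" and dl :: "nat \<Rightarrow> nat \<Rightarrow> nat"
  assumes E_subset: "E \<subseteq> {1..I} \<times> {1..I}"
    and no_loops: "(i, i) \<notin> E"
    and strongly_connected: "i \<in> {1..I} \<Longrightarrow> j \<in> {1..I} \<Longrightarrow> (i, j) \<in> E\<^sup>*"
    and mbar_pos: "0 < mbar" and mbar_less_1: "mbar < 1"
    and a_colsum: "j \<in> {1..I} \<Longrightarrow> (\<Sum>i\<in>{1..I}. a i j) = 1"
    and a_diag: "i \<in> {1..I} \<Longrightarrow> mbar \<le> a i i"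
    and a_edge: "(j, i) \<in> E \<Longrightarrow> mbar \<le> a i j"
    and a_zero: "i \<in> {1..I} \<Longrightarrow> j \<in> {1..I} \<Longrightarrow> i \<noteq> j \<Longrightarrow> (j, i) \<notin> E \<Longrightarrow> a i j = 0"
    and ik_agent: "ik k \<in> {1..I}"
    and ik_within_T: "i \<in> {1..I} \<Longrightarrow> \<exists>s<T. ik (k + s) = i"
    and delay_le_D: "j \<in> Nin E (ik k) \<Longrightarrow> dl k j \<le> D"
begin

abbreviation "V \<equiv> Vhat I E D"
abbreviation "A k \<equiv> Ahat I E a ik dl D k"
abbreviation "S k \<equiv> Smat a E ik D k"
abbreviation "R k \<equiv> Rset E ik dl D k"

lemma Ag_in_V [simp]: "Ag h \<in> V \<longleftrightarrow> h \<in> {1..I}"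
  by (auto simp: Vhat_def)

lemma Bf_in_V [simp]: "Bf j i d \<in> V \<longleftrightarrow> (j, i) \<in> E \<and> d \<le> D"
  by (auto simp: Vhat_def)

lemma finite_V: "finite V"
proof -
  have "V \<subseteq> Ag ` {1..I} \<union> (\<lambda>(j, i, d). Bf j i d) ` ({1..I} \<times> {1..I} \<times> {0..D})"
    using E_subset by (force simp: Vhat_def image_iff)
  then show ?thesis by (rule finite_subset) auto
qed

lemma I_pos: "0 < I" and T_pos: "0 < T"
  using ik_agent[of 0] ik_within_T[OF ik_agent[of 0], of 0] by auto

lemma R_Bf: "m \<in> R k \<Longrightarrow> \<exists>j d. m = Bf j (ik k) d \<and> (j, ik k) \<in> E \<and> d \<le> D"
  by (auto simp: Rset_def Nin_def)

lemma Ag_notin_R: "Ag h \<notin> R k"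
  using R_Bf by blast

lemma A_column:
  assumes "c \<in> V"
  shows "A k r c = (if c \<in> R k then S k r (Ag (ik k)) else S k r c)"
proof -
  have "R k \<subseteq> V" using R_Bf by fastforce
  then show ?thesis
    using assms finite_V ik_agent unfolding Ahat_def mmult_def Cmat_def
    by (auto simp: if_distrib[of "\<lambda>x. _ * x"] cong: if_cong)
qed

lemma S_active_column:
  "S k r (Ag (ik k)) = (case r of
      Ag h \<Rightarrow> if h = ik k then a (ik k) (ik k) else 0
    | Bf i j d \<Rightarrow> if i = ik k \<and> (ik k, j) \<in> E \<and> d = 0 then a j (ik k) else 0)"
  by (cases r) (simp_all add: Smat_def Nout_def)

lemma S_nonneg: "0 \<le> S k r c"
  using a_diag[OF ik_agent] a_edge mbar_pos
  by (auto simp: Smat_def Nout_def split: node.splits) (smt (verit))+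

lemma a_out_sum:
  assumes i: "i \<in> {1..I}"
  shows "a i i + (\<Sum>j\<in>Nout E i. a j i) = 1"
proof -
  have "(\<Sum>j\<in>Nout E i. a j i) = (\<Sum>j\<in>{1..I} - {i}. a j i)"
    using E_subset no_loops a_zero i
    by (intro sum.mono_neutral_left) (auto simp: Nout_def)
  then show ?thesis
    using sum.remove[of "{1..I}" i "\<lambda>j. a j i"] a_colsum i by simp
qed

lemma S_active_colsum: "(\<Sum>r\<in>V. S k r (Ag (ik k))) = 1"
proof -
  let ?i = "ik k"
  let ?B = "(\<lambda>j. Bf ?i j 0) ` Nout E ?i"
  have B: "?B \<subseteq> V" "Ag ?i \<notin> ?B" using ik_agent by (auto simp: Nout_def)
  have "(\<Sum>r\<in>V. S k r (Ag ?i)) = (\<Sum>r\<in>insert (Ag ?i) ?B. S k r (Ag ?i))"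
    using B ik_agent finite_V
    by (intro sum.mono_neutral_right) (auto simp: S_active_column Nout_def split: node.splits)
  also have "\<dots> = a ?i ?i + (\<Sum>j\<in>Nout E ?i. S k (Bf ?i j 0) (Ag ?i))"
    using B finite_subset[OF B(1) finite_V]
    by (simp add: S_active_column sum.reindex inj_on_def)
  also have "(\<Sum>j\<in>Nout E ?i. S k (Bf ?i j 0) (Ag ?i)) = (\<Sum>j\<in>Nout E ?i. a j ?i)"
    by (intro sum.cong) (auto simp: S_active_column Nout_def)
  finally show ?thesis
    using a_out_sum[OF ik_agent] by simp
qed

lemma S_colsum: "c \<in> V \<Longrightarrow> (\<Sum>r\<in>V. S k r c) = 1"
proof (cases c)
  case (Ag h)
  assume "c \<in> V"
  then show ?thesis
    using S_active_colsum finite_V by (cases "h = ik k") (auto simp: Ag Smat_def)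
next
  case (Bf i j d)
  assume "c \<in> V"
  then show ?thesis
    using finite_V by (cases "d < D") (auto simp: Bf Smat_def)
qed

sublocale column_stochastic_seq V A
proof
  show "0 \<le> A k r c" for k r c
    unfolding Ahat_def mmult_def Cmat_def by (auto intro!: sum_nonneg simp: S_nonneg)
  show "c \<in> V \<Longrightarrow> (\<Sum>r\<in>V. A k r c) = 1" for k c
    using R_Bf ik_agent by (cases "c \<in> R k") (auto simp: A_column S_colsum)
qed (rule finite_V)

lemma Aprod_eq_Mprod:
  assumes "r \<in> V" "c \<in> V"
  shows "Aprod I E a ik dl D t n r c = Mprod t (Suc n) r c"
  using assms(1)
proof (induction n arbitrary: r)
  case 0
  have "Mprod t (Suc 0) r c = (\<Sum>l\<in>V. if l = c then A t r c else 0)"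
    by (simp add: mmult_def) (rule sum.cong, auto)
  then show ?case using assms(2) finite_V by simp
next
  case (Suc n)
  then show ?case by (simp add: mmult_def)
qed

lemma A_agent_stay: "h \<in> {1..I} \<Longrightarrow> mbar \<le> A k (Ag h) (Ag h)"
  using a_diag mbar_less_1 by (auto simp: A_column Ag_notin_R Smat_def)

lemma A_agent_send: "(ik k, j) \<in> E \<Longrightarrow> mbar \<le> A k (Bf (ik k) j 0) (Ag (ik k))"
  using a_edge ik_agent by (auto simp: A_column Ag_notin_R S_active_column)

lemma A_buffer_absorb:
  assumes "Bf j i d \<in> R k"
  shows "mbar \<le> A k (Ag i) (Bf j i d)"
  using R_Bf[OF assms] assms a_diag[OF ik_agent] by (auto simp: A_column S_active_column)

lemma A_buffer_shift:
  assumes "Bf j i d \<notin> R k" "(j, i) \<in> E" "d \<le> D"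
  shows "mbar \<le> A k (Bf j i (min D (Suc d))) (Bf j i d)"
  using assms mbar_less_1 by (auto simp: A_column Smat_def min_def)

lemma Bf_D_in_R:
  assumes "(j, ik k) \<in> E"
  shows "Bf j (ik k) D \<in> R k"
proof -
  have j: "j \<in> Nin E (ik k)" using assms by (simp add: Nin_def)
  then have "int k - tau E ik dl D k (ik k) j \<le> int D"
    using delay_le_D[OF j] by (simp add: tau_def)
  then show ?thesis
    using j unfolding Rset_def by blast
qed

definition reaches :: "nat \<Rightarrow> nat \<Rightarrow> node \<Rightarrow> node \<Rightarrow> bool" where
  "reaches s n c r \<longleftrightarrow> r \<in> V \<and> mbar ^ n \<le> Mprod s n r c"

lemma reaches_start: "c \<in> V \<Longrightarrow> reaches s 0 c c"
  by (simp add: reaches_def)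

lemma reaches_Suc:
  assumes "reaches s n c r" "r' \<in> V" "mbar \<le> A (s + n) r' r"
  shows "reaches s (Suc n) c r'"
  using assms Mprod_Suc_lower[of mbar n s r c r'] mbar_pos by (simp add: reaches_def)

lemma reaches_agent_mono:
  assumes "reaches s n c (Ag h)" "n \<le> n'"
  shows "reaches s n' c (Ag h)"
  using assms(2)
proof (induction n' rule: dec_induct)
  case (step m)
  then show ?case
    using reaches_Suc[OF step.IH] A_agent_stay assms(1) by (simp add: reaches_def)
qed (rule assms(1))

lemma reaches_buffer_drain:
  assumes "reaches s n c (Bf j i d)" "(j, i) \<in> E" "d \<le> D"
  shows "reaches s (n + p) c (Ag i) \<or> reaches s (n + p) c (Bf j i (min D (d + p)))"
proof (induction p)
  case 0
  then show ?case using assms(1,3) by simp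
next
  case (Suc p)
  have i: "Ag i \<in> V" using assms(2) E_subset by auto
  let ?d = "min D (d + p)"
  from Suc.IH show ?case
  proof
    assume "reaches s (n + p) c (Ag i)"
    then show ?case using reaches_agent_mono by simp
  next
    assume buf: "reaches s (n + p) c (Bf j i ?d)"
    show ?case
    proof (cases "Bf j i ?d \<in> R (s + (n + p))")
      case True
      then show ?thesis using reaches_Suc[OF buf i A_buffer_absorb] by simp
    next
      case False
      have "min D (Suc ?d) = min D (d + Suc p)" by simp
      then show ?thesis
        using reaches_Suc[OF buf _ A_buffer_shift[OF False assms(2)]] assms(2) by simp
    qed
  qed
qed

lemma reaches_buffer_agent:
  assumes "reaches s n c (Bf j i d)" "(j, i) \<in> E" "d \<le> D"
  shows "reaches s (n + (D - d) + T) c (Ag i)"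
proof -
  have i: "i \<in> {1..I}" using assms(2) E_subset by auto
  define m where "m = n + (D - d)"
  obtain q where q: "q < T" "ik (s + m + q) = i" using ik_within_T[OF i] by blast
  from reaches_buffer_drain[OF assms, of "D - d + q"] assms(3)
  have "reaches s (m + q) c (Ag i) \<or> reaches s (m + q) c (Bf j i D)"
    by (simp add: m_def add.assoc)
  then have "reaches s (Suc (m + q)) c (Ag i)"
  proof
    assume "reaches s (m + q) c (Bf j i D)"
    moreover have "Bf j i D \<in> R (s + (m + q))"
      using Bf_D_in_R[of j "s + (m + q)"] q(2) assms(2) by (simp add: add.assoc)
    ultimately show ?thesis
      using reaches_Suc A_buffer_absorb i by auto
  qed (auto intro: reaches_agent_mono)
  then show ?thesis
    using q(1) by (auto simp: m_def intro: reaches_agent_mono)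
qed

lemma reaches_edge:
  assumes "reaches s n c (Ag h)" "(h, j) \<in> E"
  shows "reaches s (n + (2 * T + D)) c (Ag j)"
proof -
  have "h \<in> {1..I}" using assms(2) E_subset by auto
  then obtain q where q: "q < T" "ik (s + n + q) = h" using ik_within_T by blast
  have "reaches s (n + q) c (Ag h)" using reaches_agent_mono[OF assms(1)] by simp
  then have "reaches s (Suc (n + q)) c (Bf h j 0)"
    using reaches_Suc A_agent_send[of "s + (n + q)" j] q(2) assms(2) by (simp add: add.assoc)
  from reaches_buffer_agent[OF this assms(2)] have "reaches s (Suc (n + q) + D + T) c (Ag j)"
    by simp
  then show ?thesis
    using q(1) by (elim reaches_agent_mono) simp
qed

lemma reaches_relpow:
  "(h, g) \<in> E ^^ p \<Longrightarrow> reaches s n c (Ag h) \<Longrightarrow> reaches s (n + p * (2 * T + D)) c (Ag g)"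
proof (induction p arbitrary: g)
  case (Suc p)
  then obtain y where y: "(h, y) \<in> E ^^ p" "(y, g) \<in> E" by auto
  from reaches_edge[OF Suc.IH[OF y(1) Suc.prems(2)] y(2)] show ?case
    by (simp add: algebra_simps)
qed simp

abbreviation K1 :: nat where
  "K1 \<equiv> (2 * I - 1) * T + I * D"

text \<open>\<open>K1 = (T + D) + (I - 1) (2 T + D)\<close>: at most \<open>T + D\<close> steps to leave a buffer, then
  at most \<open>I - 1\<close> edges of the graph, each crossed within \<open>2 T + D\<close> steps.\<close>

lemma Mprod_window_lower:
  assumes "c \<in> V" "g \<in> {1..I}"
  shows "mbar ^ K1 \<le> Mprod s K1 (Ag g) c"
proof -
  obtain h where h: "h \<in> {1..I}" "reaches s (T + D) c (Ag h)"
  proof (cases c)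
    case (Ag h)
    then have "reaches s 0 c (Ag h)" using reaches_start[OF assms(1)] by simp
    then show ?thesis
      using that reaches_agent_mono assms(1) Ag by auto
  next
    case (Bf j i d)
    then have ji: "(j, i) \<in> E" "d \<le> D" using assms(1) by auto
    have "reaches s 0 c (Bf j i d)" using reaches_start[OF assms(1)] Bf by simp
    from reaches_buffer_agent[OF this ji] have "reaches s (T + D) c (Ag i)"
      using ji(2) by (elim reaches_agent_mono) simp
    then show ?thesis
      using that ji(1) E_subset by auto
  qed
  obtain p where p: "p < I" "(h, g) \<in> E ^^ p"
    using rtrancl_imp_relpow_less_card[OF _ E_subset h(1) strongly_connected[OF h(1) assms(2)]]
    by auto
  have "T + D + p * (2 * T + D) \<le> T + D + (I - 1) * (2 * T + D)"
    using p(1) by (intro add_left_mono mult_right_mono) auto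
  also have "\<dots> = K1"
    using I_pos by (cases I) (simp_all add: algebra_simps)
  finally show ?thesis
    using reaches_agent_mono[OF reaches_relpow[OF p(2) h(2)]] by (simp add: reaches_def)
qed

sublocale ergodic_seq V A K1 "mbar ^ K1" "Ag ` {1..I}"
proof
  show "0 < K1" using I_pos T_pos by simp
  then show "mbar ^ K1 < 1" using mbar_pos mbar_less_1 by (simp add: power_less_one_iff)
qed (use mbar_pos I_pos Mprod_window_lower in auto)

end

theorem lemma4:
  fixes I T D :: nat and E :: "(nat \<times> nat) set" and a :: "nat \<Rightarrow> nat \<Rightarrow> real"
    and mbar :: real and ik :: "nat \<Rightarrow> nat" and dl :: "nat \<Rightarrow> nat \<Rightarrow> nat"
  assumes E_sub: "E \<subseteq> {1..I} \<times> {1..I}"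
    and no_loops: "\<forall>i. (i, i) \<notin> E"
    and strong: "\<forall>i\<in>{1..I}. \<forall>j\<in>{1..I}. (i, j) \<in> E\<^sup>*"
    and mbar: "0 < mbar" "mbar < 1"
    and col_stoch: "\<forall>j\<in>{1..I}. (\<Sum>i\<in>{1..I}. a i j) = 1"
    and diag: "\<forall>i\<in>{1..I}. a i i \<ge> mbar"
    and edge: "\<forall>i j. (j, i) \<in> E \<longrightarrow> a i j \<ge> mbar"
    and zero: "\<forall>i\<in>{1..I}. \<forall>j\<in>{1..I}. i \<noteq> j \<and> (j, i) \<notin> E \<longrightarrow> a i j = 0"
    and ik_V: "\<forall>k. ik k \<in> {1..I}"
    and ik_T: "\<forall>k. \<forall>i\<in>{1..I}. \<exists>s<T. ik (k + s) = i"
    and delays: "\<forall>k. \<forall>j\<in>Nin E (ik k). dl k j \<le> D"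
  shows
    "let K1 = (2 * I - 1) * T + I * D;
         \<eta> = mbar ^ K1;
         C = 2 * (1 + 1 / mbar ^ K1) / (1 - mbar ^ K1);
         \<rho> = (1 - mbar ^ K1) powr (1 / real K1);
         V' = Vhat I E D
     in 0 < \<rho> \<and> \<rho> < 1 \<and>
        (\<exists>\<xi> :: nat \<Rightarrow> node \<Rightarrow> real.
           (\<forall>k. stochastic_vec V' (\<xi> k)) \<and>
           (\<forall>k t. t \<le> k \<longrightarrow> (\<forall>i\<in>V'. \<forall>j\<in>V'.
              \<bar>Aprod I E a ik dl D t (k - t) i j - \<xi> k i\<bar> \<le> C * \<rho> ^ (k - t))) \<and>
           (\<forall>k. \<forall>i\<in>{1..I}. \<xi> k (Ag i) \<ge> \<eta>))"
proof -
  interpret augmented_network I T D E a mbar ik dl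
    using assms by unfold_locales auto
  have K1_pos: "0 < K1" and eta: "0 < mbar ^ K1" "mbar ^ K1 < 1"
    using I_pos T_pos mbar_pos mbar_less_1 by (simp_all add: power_less_one_iff)
  obtain \<xi> where "\<And>k. stochastic_vec V (\<xi> k)"
    and "\<And>k t i j. t \<le> k \<Longrightarrow> i \<in> V \<Longrightarrow> j \<in> V \<Longrightarrow>
      \<bar>Mprod t (Suc (k - t)) i j - \<xi> k i\<bar>
        \<le> 2 * (1 + 1 / mbar ^ K1) / (1 - mbar ^ K1) * ((1 - mbar ^ K1) powr (1 / real K1)) ^ (k - t)"
    and "\<And>k g. g \<in> Ag ` {1..I} \<Longrightarrow> mbar ^ K1 \<le> \<xi> k g"
    using weak_ergodicity by metis
  then show ?thesis
    unfolding Let_def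
    using root_powr_bounds[of "1 - mbar ^ K1" K1] K1_pos eta
    by (intro conjI exI[of _ \<xi>] allI impI ballI) (simp_all add: Aprod_eq_Mprod del: Mprod.simps)
qed

end
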